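(* Let $h:\mathbb{R}\to\mathbb{R}$ be a smooth function with $h(T)=\pi/2$ for $T\le 0$, $0<h(T)<\pi/2$ for $0<T<1$, and $h(T)=0$ for $T\ge 1$. For $0<x<1$ let $g(x)=\tan\bigl(h(x)\bigr)$, and for $0\le x<1$ let $B(x)=\exp\left(\int_0^x \cot\bigl(h(z)\bigr)\,dz\right)$. Assume $g'''(x)<0$ for all $0<x<1$. Fix $\kappa\in(0,1)$ and define, for $\kappa<x<1$, $$\mathcal{D}(x)=\frac{1}{B(x)}\int_\kappa^{x} B'(z)\,\frac{\cos(x-z)}{x-z}\left(\frac{g(x)-g(z)}{x-z}-g'(x)\right)dz .$$ Then $\lim_{x\to 1_-}\mathcal{D}(x)=0$.
   Context: (In the paper the variable $x$ appears as $y+A$, and $\alpha=x-z$.) *)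

theory Defs
  imports "HOL-Analysis.Analysis"
begin

definition smooth_real :: "(real \<Rightarrow> real) \<Rightarrow> bool" where
  "smooth_real f \<longleftrightarrow> (\<forall>n x. ((deriv ^^ n) f) differentiable (at x))"

end

theory Submission
  imports Defs "HOL-Real_Asymp.Real_Asymp"
begin

(* Write the integrand of D as B'(z) cos(x - z) q(x, z), where
   q(x, z) = ((g x - g z) / (x - z) - g'(x)) / (x - z) is the second-order Taylor quotient
   of g = tan o h. By Taylor, |q(x, z)| is at most the supremum of |g''| on [z, x]. As h is
   smooth and constant on [1, oo), h'(1) = h''(1) = 0, so g'' extends continuously to 1 with
   value 0: q is bounded for kappa <= z <= x < 1 and uniformly small once z is close to 1.
   Since h(z) = O(1 - z), cot (h z) >= c / (1 - z) near 1, hence B(x) -> oo. Thus D(x) is an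
   average of a bounded quantity that tends to 0, against the weights B' >= 0 whose total mass
   B(x) - B(kappa) diverges, and such averages tend to 0. *)

lemma smooth_real_has_real_derivative:
  assumes "smooth_real f"
  shows "((deriv ^^ n) f has_real_derivative (deriv ^^ Suc n) f x) (at x)"
  using assms by (simp add: smooth_real_def DERIV_deriv_iff_real_differentiable)

lemma smooth_real_higher_deriv_eq_0:
  assumes f: "smooth_real f" and const: "\<And>t. a \<le> t \<Longrightarrow> f t = c" and "0 < n"
  shows "(deriv ^^ n) f a = 0"
proof -
  have deriv_const_eq_0: "(deriv ^^ Suc m) (\<lambda>_. c) = (\<lambda>_::real. 0::real)" for m
    by (induction m) auto
  have "(deriv ^^ n) f t = 0" if "a < t" for t
  proof -
    have "eventually (\<lambda>s. f s = (\<lambda>_. c) s) (nhds t)"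
      using eventually_nhds_in_open[of "{a<..}" t] that by (auto elim!: eventually_mono intro: const)
    then show ?thesis using higher_deriv_cong_ev[of f "\<lambda>_. c" t t n] deriv_const_eq_0 \<open>0 < n\<close>
      by (metis gr0_implies_Suc)
  qed
  then have "((deriv ^^ n) f \<longlongrightarrow> 0) (at_right a)"
    by (intro tendsto_eventually) (auto simp: eventually_at_right_field intro: exI[of _ "a + 1"])
  moreover have "((deriv ^^ n) f \<longlongrightarrow> (deriv ^^ n) f a) (at_right a)"
    using DERIV_isCont[OF smooth_real_has_real_derivative[OF f]]
    by (simp add: isCont_def filterlim_at_split)
  ultimately show ?thesis using tendsto_unique[OF trivial_limit_at_right_real] by blast
qed

definition second_order_quotient :: "(real \<Rightarrow> real) \<Rightarrow> real \<Rightarrow> real \<Rightarrow> real" where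
  "second_order_quotient f x z = ((f x - f z) / (x - z) - deriv f x) / (x - z)"

lemma abs_second_order_quotient_le:
  fixes G G' G'' :: "real \<Rightarrow> real"
  assumes "z \<le> x"
    and G': "\<And>t. t \<in> {z..x} \<Longrightarrow> (G has_real_derivative G' t) (at t)"
    and G'': "\<And>t. t \<in> {z..x} \<Longrightarrow> (G' has_real_derivative G'' t) (at t)"
    and bound: "\<And>t. t \<in> {z..x} \<Longrightarrow> \<bar>G'' t\<bar> \<le> K"
  shows "\<bar>second_order_quotient G x z\<bar> \<le> K"
proof -
  have x: "x \<in> {z..x}" using \<open>z \<le> x\<close> by simp
  have G'_lipschitz: "\<bar>G' t - G' x\<bar> \<le> K * (x - z)" if "t \<in> {z..x}" for t
  proof -
    have "\<bar>G' t - G' x\<bar> \<le> K * \<bar>t - x\<bar>"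
      using field_differentiable_bound[of "{z..x}" G' G'' K t x] G'' bound that x
      by (auto intro: has_field_derivative_at_within)
    also have "\<dots> \<le> K * (x - z)"
      using that bound[OF x] by (intro mult_left_mono) auto
    finally show ?thesis .
  qed
  have "\<bar>G x - G z - (x - z) * G' x\<bar> \<le> \<bar>x - z\<bar> * (K * (x - z))"
    using vector_differentiable_bound_linearization[of "{z..x}" G G' z x x "K * (x - z)"]
      G' G'_lipschitz x
    by (auto simp: has_real_derivative_iff_has_vector_derivative[symmetric] closed_segment_eq_real_ivl
        intro: has_field_derivative_at_within)
  then have bound_num: "\<bar>G x - G z - (x - z) * G' x\<bar> \<le> K * (x - z)\<^sup>2"
    using \<open>z \<le> x\<close> by (simp add: power2_eq_square mult.assoc mult.left_commute)
  have "deriv G x = G' x" using G'[OF x] by (rule DERIV_imp_deriv)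
  then have "second_order_quotient G x z = (G x - G z - (x - z) * G' x) / (x - z)\<^sup>2"
    by (cases "z = x") (simp_all add: second_order_quotient_def field_simps power2_eq_square)
  then show ?thesis
    using bound_num bound[OF x] by (cases "z = x") (auto simp: abs_div divide_le_eq)
qed

lemma second_order_quotient_uniform_bounds:
  fixes G G' G'' :: "real \<Rightarrow> real"
  assumes "a < b"
    and G': "\<And>t. t \<in> {a..b} \<Longrightarrow> (G has_real_derivative G' t) (at t)"
    and G'': "\<And>t. t \<in> {a..b} \<Longrightarrow> (G' has_real_derivative G'' t) (at t)"
    and cont: "continuous_on {a..b} G''" and "G'' b = 0"
  shows "\<exists>M. \<forall>x z. a \<le> z \<longrightarrow> z \<le> x \<longrightarrow> x \<le> b \<longrightarrow> \<bar>second_order_quotient G x z\<bar> \<le> M"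
    and "0 < \<epsilon> \<Longrightarrow>
      \<exists>y\<in>{a..<b}. \<forall>x z. y \<le> z \<longrightarrow> z \<le> x \<longrightarrow> x \<le> b \<longrightarrow> \<bar>second_order_quotient G x z\<bar> \<le> \<epsilon>"
proof -
  have quotient_le: "\<bar>second_order_quotient G x z\<bar> \<le> K"
    if "a \<le> y" "y \<le> z" "z \<le> x" "x \<le> b" "\<And>t. t \<in> {y..b} \<Longrightarrow> \<bar>G'' t\<bar> \<le> K" for x y z K
    by (rule abs_second_order_quotient_le[where G'=G' and G''=G'']) (use that G' G'' in auto)
  have "bounded (G'' ` {a..b})"
    using cont by (intro compact_imp_bounded compact_continuous_image) auto
  then obtain M where "\<And>t. t \<in> {a..b} \<Longrightarrow> \<bar>G'' t\<bar> \<le> M"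
    unfolding bounded_iff real_norm_def by blast
  then show "\<exists>M. \<forall>x z. a \<le> z \<longrightarrow> z \<le> x \<longrightarrow> x \<le> b \<longrightarrow> \<bar>second_order_quotient G x z\<bar> \<le> M"
    using quotient_le[of a] by blast
  show "\<exists>y\<in>{a..<b}. \<forall>x z. y \<le> z \<longrightarrow> z \<le> x \<longrightarrow> x \<le> b \<longrightarrow> \<bar>second_order_quotient G x z\<bar> \<le> \<epsilon>"
    if "0 < \<epsilon>"
  proof -
    obtain d where "0 < d" and d: "\<And>t. t \<in> {a..b} \<Longrightarrow> dist t b < d \<Longrightarrow> \<bar>G'' t\<bar> < \<epsilon>"
      using cont \<open>0 < \<epsilon>\<close> \<open>a < b\<close> \<open>G'' b = 0\<close> unfolding continuous_on_iff
      by (metis atLeastAtMost_iff dist_real_def diff_0_right less_eq_real_def order_refl)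
    define y where "y = max a (b - d / 2)"
    have "y \<in> {a..<b}" using \<open>a < b\<close> \<open>0 < d\<close> by (simp add: y_def)
    moreover have "\<bar>G'' t\<bar> \<le> \<epsilon>" if "t \<in> {y..b}" for t
      using d[of t] that \<open>0 < d\<close> by (simp add: y_def dist_real_def)
    ultimately show ?thesis by (intro bexI[of _ y] allI impI quotient_le) auto
  qed
qed

lemma tan_comp_second_order_quotient_bounds:
  fixes h :: "real \<Rightarrow> real"
  assumes h: "smooth_real h" and const: "\<And>t. b \<le> t \<Longrightarrow> h t = c" and "a < b"
    and cos: "\<And>t. t \<in> {a..b} \<Longrightarrow> cos (h t) \<noteq> 0"
  shows "\<exists>M. \<forall>x z. a \<le> z \<longrightarrow> z \<le> x \<longrightarrow> x \<le> b \<longrightarrow>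
      \<bar>second_order_quotient (\<lambda>t. tan (h t)) x z\<bar> \<le> M"
    and "0 < \<epsilon> \<Longrightarrow> \<exists>y\<in>{a..<b}. \<forall>x z. y \<le> z \<longrightarrow> z \<le> x \<longrightarrow> x \<le> b \<longrightarrow>
      \<bar>second_order_quotient (\<lambda>t. tan (h t)) x z\<bar> \<le> \<epsilon>"
proof -
  define h' where "h' = deriv h"
  define h'' where "h'' = deriv h'"
  have dh: "(h has_real_derivative h' t) (at t)" for t
    using smooth_real_has_real_derivative[OF h, of 0] by (simp add: h'_def)
  have dh': "(h' has_real_derivative h'' t) (at t)" for t
    using smooth_real_has_real_derivative[OF h, of 1] by (simp add: h'_def h''_def)
  have "isCont h'' t" for t
    using DERIV_isCont[OF smooth_real_has_real_derivative[OF h, of 2]]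
    by (simp add: h'_def h''_def numeral_2_eq_2)
  define G' where "G' t = h' t / (cos (h t))\<^sup>2" for t
  define G'' where "G'' t = h'' t / (cos (h t))\<^sup>2 + 2 * (h' t)\<^sup>2 * sin (h t) / (cos (h t)) ^ 3" for t
  have G': "((\<lambda>t. tan (h t)) has_real_derivative G' t) (at t)"
    and G'': "(G' has_real_derivative G'' t) (at t)"
    and "isCont G'' t" if "t \<in> {a..b}" for t
    using cos[OF that] DERIV_isCont[OF dh] DERIV_isCont[OF dh'] \<open>isCont h'' t\<close>
    unfolding G'_def G''_def
    by (auto intro!: derivative_eq_intros continuous_intros dh dh'
        simp: field_simps power2_eq_square power3_eq_cube)
  then have "continuous_on {a..b} G''" by (simp add: continuous_at_imp_continuous_on)
  moreover have "h' b = 0" "h'' b = 0"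
    using smooth_real_higher_deriv_eq_0[OF h const, where n=1]
      smooth_real_higher_deriv_eq_0[OF h const, where n=2]
    by (simp_all add: h'_def h''_def numeral_2_eq_2)
  then have "G'' b = 0" by (simp add: G''_def)
  ultimately show "\<exists>M. \<forall>x z. a \<le> z \<longrightarrow> z \<le> x \<longrightarrow> x \<le> b \<longrightarrow>
      \<bar>second_order_quotient (\<lambda>t. tan (h t)) x z\<bar> \<le> M"
    and "0 < \<epsilon> \<Longrightarrow> \<exists>y\<in>{a..<b}. \<forall>x z. y \<le> z \<longrightarrow> z \<le> x \<longrightarrow> x \<le> b \<longrightarrow>
      \<bar>second_order_quotient (\<lambda>t. tan (h t)) x z\<bar> \<le> \<epsilon>"
    using second_order_quotient_uniform_bounds[OF \<open>a < b\<close> G' G''] by blast+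
qed

lemma second_order_quotient_cong:
  assumes "open S" "x \<in> S" "z \<in> S" "\<And>t. t \<in> S \<Longrightarrow> f t = g t"
  shows "second_order_quotient f x z = second_order_quotient g x z"
proof -
  have "deriv f x = deriv g x"
    using assms by (intro deriv_cong_ev) (auto simp: eventually_nhds)
  then show ?thesis using assms by (simp add: second_order_quotient_def)
qed

lemma exp_integral_has_real_derivative:
  fixes c B :: "real \<Rightarrow> real"
  assumes c: "continuous_on {a..<b} c"
    and B_def: "\<And>x. x \<in> {a..<b} \<Longrightarrow> B x = exp (integral {a..x} c)"
    and z: "z \<in> {a<..<b}"
  shows "(B has_real_derivative B z * c z) (at z)"
proof -
  define b' where "b' = (z + b) / 2"
  have z': "z \<in> {a<..<b'}" "b' < b" using z by (auto simp: b'_def)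
  have "continuous_on {a..b'} c"
    using z' by (intro continuous_on_subset[OF c]) (simp add: subset_eq)
  then have "((\<lambda>x. integral {a..x} c) has_real_derivative c z) (at z within {a..b'})"
    using z' by (intro integral_has_real_derivative) simp_all
  then have "((\<lambda>x. integral {a..x} c) has_real_derivative c z) (at z within {a<..<b'})"
    by (rule has_field_derivative_subset) auto
  then have "((\<lambda>x. integral {a..x} c) has_real_derivative c z) (at z)"
    using z' at_within_open[of z "{a<..<b'}"] by simp
  then have "((\<lambda>x. exp (integral {a..x} c)) has_real_derivative exp (integral {a..z} c) * c z) (at z)"
    by (auto intro!: derivative_eq_intros)
  then have "(B has_real_derivative exp (integral {a..z} c) * c z) (at z)"
  proof (rule has_field_derivative_transform_within_open[where S="{a<..<b}"])
    show "exp (integral {a..x} c) = B x" if "x \<in> {a<..<b}" for x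
      using B_def[of x] that by simp
  qed (use z in simp_all)
  then show ?thesis using z B_def by simp
qed

lemma integral_tendsto_at_top_at_left:
  fixes c :: "real \<Rightarrow> real"
  assumes "0 < K" "a < b"
    and int: "\<And>x. x \<in> {a..<b} \<Longrightarrow> c integrable_on {a..x}"
    and lower: "\<And>z. z \<in> {a..<b} \<Longrightarrow> K / (b - z) \<le> c z"
  shows "filterlim (\<lambda>x. integral {a..x} c) at_top (at_left b)"
proof (rule filterlim_at_top_mono)
  have "filterlim (\<lambda>x. ln (b - a) - ln (b - x)) at_top (at_left b)"
    by real_asymp
  then show "filterlim (\<lambda>x. K * (ln (b - a) - ln (b - x))) at_top (at_left b)"
    using \<open>0 < K\<close> by (intro filterlim_tendsto_pos_mult_at_top[OF tendsto_const])
  have "K * (ln (b - a) - ln (b - x)) \<le> integral {a..x} c" if "x \<in> {a<..<b}" for x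
  proof (rule has_integral_le[OF _ integrable_integral[OF int]])
    have "((\<lambda>z. K / (b - z)) has_integral (- K * ln (b - x)) - (- K * ln (b - a))) {a..x}"
    proof (rule fundamental_theorem_of_calculus)
      fix z assume "z \<in> {a..x}"
      then have "((\<lambda>z. - K * ln (b - z)) has_real_derivative K / (b - z)) (at z)"
        using that by (auto intro!: derivative_eq_intros)
      then show "((\<lambda>z. - K * ln (b - z)) has_vector_derivative K / (b - z)) (at z within {a..x})"
        by (simp add: has_real_derivative_iff_has_vector_derivative has_vector_derivative_at_within)
    qed (use that in auto)
    then show "((\<lambda>z. K / (b - z)) has_integral K * (ln (b - a) - ln (b - x))) {a..x}"
      by (simp add: algebra_simps)
  qed (use that lower in simp_all)
  then show "\<forall>\<^sub>F x in at_left b. K * (ln (b - a) - ln (b - x)) \<le> integral {a..x} c"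
    using eventually_at_left_real[OF \<open>a < b\<close>] by (auto elim!: eventually_mono)
qed

lemma cot_ge_inverse_double:
  fixes u :: real
  assumes "0 < u" "u \<le> 1"
  shows "1 / (2 * u) \<le> cot u"
proof -
  have cos: "1 / 2 \<le> cos u"
    using cos_monotone_0_pi_le[of u "pi / 3"] cos_60 assms pi_gt3 by auto
  have sin: "0 < sin u" "sin u \<le> u"
    using assms pi_gt3 sin_x_le_x by (auto intro: sin_gt_zero)
  have "1 / (2 * u) \<le> (1 / 2) / sin u" using sin by (simp add: frac_le)
  also have "\<dots> \<le> cos u / sin u" using cos sin by (intro divide_right_mono) auto
  finally show ?thesis by (simp add: cot_def)
qed

lemma C1_vanishing_le_linear:
  fixes h h' :: "real \<Rightarrow> real"
  assumes h': "\<And>t. t \<in> {a..b} \<Longrightarrow> (h has_real_derivative h' t) (at t)"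
    and "continuous_on {a..b} h'" and "h b = 0"
  obtains L where "0 < L" "\<And>z. z \<in> {a..b} \<Longrightarrow> h z \<le> L * (b - z)"
proof -
  have "bounded (h' ` {a..b})"
    using \<open>continuous_on {a..b} h'\<close> by (intro compact_imp_bounded compact_continuous_image) auto
  then obtain L where "0 < L" and L: "\<And>t. t \<in> {a..b} \<Longrightarrow> \<bar>h' t\<bar> \<le> L"
    unfolding bounded_pos real_norm_def by blast
  moreover have "h z \<le> L * (b - z)" if "z \<in> {a..b}" for z
  proof -
    have "norm (h b - h z) \<le> L * norm (b - z)"
      by (rule field_differentiable_bound[of "{a..b}" h h'])
        (use h' L that in \<open>auto intro: has_field_derivative_at_within\<close>)
    then show ?thesis using that \<open>h b = 0\<close> by simp
  qed
  ultimately show thesis using that by blast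
qed

lemma integral_cot_comp_tendsto_at_top:
  fixes h h' :: "real \<Rightarrow> real"
  assumes "a < b"
    and h': "\<And>t. t \<in> {a..b} \<Longrightarrow> (h has_real_derivative h' t) (at t)"
    and "continuous_on {a..b} h'" and "h b = 0"
    and pos: "\<And>t. t \<in> {a<..<b} \<Longrightarrow> 0 < h t"
    and int: "\<And>x. x \<in> {a..<b} \<Longrightarrow> (\<lambda>z. cot (h z)) integrable_on {a..x}"
  shows "filterlim (\<lambda>x. integral {a..x} (\<lambda>z. cot (h z))) at_top (at_left b)"
proof -
  obtain L where "0 < L" and h_le: "\<And>z. z \<in> {a..b} \<Longrightarrow> h z \<le> L * (b - z)"
    using C1_vanishing_le_linear[OF h' \<open>continuous_on {a..b} h'\<close> \<open>h b = 0\<close>] by blast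
  define a' where "a' = max ((a + b) / 2) (b - 1 / L)"
  have a': "a < a'" "a' < b" using \<open>a < b\<close> \<open>0 < L\<close> by (auto simp: a'_def less_max_iff_disj)
  have "1 / (2 * L) / (b - z) \<le> cot (h z)" if "z \<in> {a'..<b}" for z
  proof -
    have "0 < h z" using pos[of z] that a' by auto
    moreover have "L * (b - z) \<le> 1"
      using that \<open>0 < L\<close> by (auto simp: a'_def field_simps)
    ultimately have "1 / (2 * L * (b - z)) \<le> 1 / (2 * h z)" "1 / (2 * h z) \<le> cot (h z)"
      using h_le[of z] that a' \<open>0 < L\<close>
      by (auto intro!: divide_left_mono cot_ge_inverse_double mult_pos_pos)
    then show ?thesis by simp
  qed
  moreover have "(\<lambda>z. cot (h z)) integrable_on {a'..x}" if "x \<in> {a'..<b}" for x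
    using int[of x] that a' by (auto intro: integrable_subinterval_real)
  ultimately have "filterlim (\<lambda>x. integral {a'..x} (\<lambda>z. cot (h z))) at_top (at_left b)"
    using \<open>0 < L\<close> a' by (intro integral_tendsto_at_top_at_left[where K="1 / (2 * L)"]) auto
  then have "filterlim (\<lambda>x. integral {a..a'} (\<lambda>z. cot (h z)) + integral {a'..x} (\<lambda>z. cot (h z)))
      at_top (at_left b)"
    by (rule filterlim_tendsto_add_at_top[OF tendsto_const])
  moreover have "\<forall>\<^sub>F x in at_left b. integral {a..a'} (\<lambda>z. cot (h z)) + integral {a'..x} (\<lambda>z. cot (h z))
      = integral {a..x} (\<lambda>z. cot (h z))"
    using eventually_at_left_real[OF \<open>a' < b\<close>]
    by eventually_elim (use int a' in \<open>auto intro!: Henstock_Kurzweil_Integration.integral_combine\<close>)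
  ultimately show ?thesis by (rule filterlim_mono_eventually[OF _ order_refl order_refl])
qed

lemma exp_integral_cot_comp:
  fixes h B :: "real \<Rightarrow> real"
  assumes h: "smooth_real h" and "h 0 = pi / 2" "h 1 = 0"
    and h_mid: "\<And>t. 0 < t \<Longrightarrow> t < 1 \<Longrightarrow> 0 < h t \<and> h t < pi / 2"
    and B_def: "\<And>x. 0 \<le> x \<Longrightarrow> x < 1 \<Longrightarrow> B x = exp (integral {0..x} (\<lambda>z. cot (h z)))"
  shows "\<And>z. 0 < z \<Longrightarrow> z < 1 \<Longrightarrow> (B has_real_derivative deriv B z) (at z)"
    and "\<And>z. 0 < z \<Longrightarrow> z < 1 \<Longrightarrow> 0 < deriv B z"
    and "filterlim B at_top (at_left 1)"
proof -
  have dh: "(h has_real_derivative deriv h t) (at t)" for t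
    using smooth_real_has_real_derivative[OF h, of 0] by simp
  have "0 < sin (h t)" if "t \<in> {0..<1}" for t
    using h_mid[of t] that by (cases "t = 0") (simp_all add: \<open>h 0 = pi / 2\<close> sin_gt_zero)
  then have cont: "continuous_on {0..<1} (\<lambda>z. cot (h z))"
    unfolding cot_def using DERIV_isCont[OF dh]
    by (intro continuous_at_imp_continuous_on) (fastforce intro!: continuous_intros)
  have dB: "(B has_real_derivative B z * cot (h z)) (at z)" if "0 < z" "z < 1" for z
    by (rule exp_integral_has_real_derivative[OF cont]) (use B_def that in auto)
  then show "(B has_real_derivative deriv B z) (at z)" if "0 < z" "z < 1" for z
    using that by (metis DERIV_imp_deriv)
  show "0 < deriv B z" if "0 < z" "z < 1" for z
    using DERIV_imp_deriv[OF dB[OF that]] B_def[of z] h_mid[OF that] that by (simp add: cot_gt_zero)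
  have "continuous_on {0..1} (deriv h)"
    using DERIV_isCont[OF smooth_real_has_real_derivative[OF h, of 1]]
    by (simp add: continuous_at_imp_continuous_on)
  moreover have "(\<lambda>z. cot (h z)) integrable_on {0..x}" if "x \<in> {0..<1}" for x
    using that by (intro integrable_continuous_real continuous_on_subset[OF cont]) auto
  ultimately have "filterlim (\<lambda>x. integral {0..x} (\<lambda>z. cot (h z))) at_top (at_left 1)"
    using dh h_mid \<open>h 1 = 0\<close> by (intro integral_cot_comp_tendsto_at_top) simp_all
  then have "filterlim (\<lambda>x. exp (integral {0..x} (\<lambda>z. cot (h z)))) at_top (at_left 1)"
    by (rule filterlim_compose[OF exp_at_top])
  moreover have "\<forall>\<^sub>F x in at_left 1. exp (integral {0..x} (\<lambda>z. cot (h z))) = B x"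
    using eventually_at_left_real[of 0 1] by (auto elim!: eventually_mono simp: B_def)
  ultimately show "filterlim B at_top (at_left 1)"
    by (rule filterlim_mono_eventually[OF _ order_refl order_refl])
qed

lemma abs_integral_le_antiderivative_diff:
  fixes f B B' :: "real \<Rightarrow> real"
  assumes "a \<le> b"
    and B: "\<And>t. t \<in> {a..b} \<Longrightarrow> (B has_real_derivative B' t) (at t)"
    and bound: "\<And>t. t \<in> {a..b} \<Longrightarrow> \<bar>f t\<bar> \<le> B' t"
  shows "\<bar>integral {a..b} f\<bar> \<le> B b - B a"
proof -
  have B'_int: "(B' has_integral B b - B a) {a..b}"
    using \<open>a \<le> b\<close> B by (intro fundamental_theorem_of_calculus)
      (auto simp: has_real_derivative_iff_has_vector_derivative[symmetric] intro: has_field_derivative_at_within)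
  show ?thesis
  proof (cases "f integrable_on {a..b}")
    case True
    then show ?thesis
      using integral_norm_bound_integral[OF True has_integral_integrable[OF B'_int]] bound
        integral_unique[OF B'_int] by simp
  next
    case False
    then show ?thesis
      using has_integral_nonneg[OF B'_int] bound
      by (force simp: not_integrable_integral intro: order_trans[OF abs_ge_zero])
  qed
qed

lemma abs_integral_split_le:
  fixes f B B' :: "real \<Rightarrow> real"
  assumes "a \<le> y" "y \<le> x"
    and B: "\<And>t. t \<in> {a..x} \<Longrightarrow> (B has_real_derivative B' t) (at t)"
    and head: "\<And>t. t \<in> {a..y} \<Longrightarrow> \<bar>f t\<bar> \<le> M * B' t"
    and tail: "\<And>t. t \<in> {y..x} \<Longrightarrow> \<bar>f t\<bar> \<le> e * B' t"
  shows "\<bar>integral {a..x} f\<bar> \<le> M * (B y - B a) + e * (B x - B y)"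
proof -
  have head_le: "\<bar>integral {a..y} f\<bar> \<le> M * B y - M * B a"
    by (intro abs_integral_le_antiderivative_diff[where B'="\<lambda>t. M * B' t"] head)
      (use assms in \<open>auto intro!: derivative_eq_intros B\<close>)
  have tail_le: "\<bar>integral {y..x} f\<bar> \<le> e * B x - e * B y"
    by (intro abs_integral_le_antiderivative_diff[where B'="\<lambda>t. e * B' t"] tail)
      (use assms in \<open>auto intro!: derivative_eq_intros B\<close>)
  show ?thesis
  proof (cases "f integrable_on {a..x}")
    case True
    then have "integral {a..x} f = integral {a..y} f + integral {y..x} f"
      using assms by (intro Henstock_Kurzweil_Integration.integral_combine[symmetric])
    then show ?thesis using head_le tail_le by (simp add: algebra_simps)
  next
    case False
    then show ?thesis using head_le tail_le by (simp add: not_integrable_integral algebra_simps)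
  qed
qed

lemma integral_weighted_average_tendsto_0:
  fixes B B' :: "real \<Rightarrow> real" and F q :: "real \<Rightarrow> real \<Rightarrow> real"
  assumes B: "\<And>z. z \<in> {\<kappa>..<b} \<Longrightarrow> (B has_real_derivative B' z) (at z)"
    and B'_nonneg: "\<And>z. z \<in> {\<kappa>..<b} \<Longrightarrow> 0 \<le> B' z"
    and B_pos: "\<And>x. x \<in> {\<kappa>..<b} \<Longrightarrow> 0 < B x"
    and B_lim: "filterlim B at_top (at_left b)"
    and F_le: "\<And>x z. \<kappa> \<le> z \<Longrightarrow> z \<le> x \<Longrightarrow> x < b \<Longrightarrow> \<bar>F x z\<bar> \<le> B' z * \<bar>q x z\<bar>"
    and q_bounded: "\<And>x z. \<kappa> \<le> z \<Longrightarrow> z \<le> x \<Longrightarrow> x < b \<Longrightarrow> \<bar>q x z\<bar> \<le> M"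
    and q_small: "\<And>\<epsilon>. 0 < \<epsilon> \<Longrightarrow>
      \<exists>y\<in>{\<kappa>..<b}. \<forall>x z. y \<le> z \<longrightarrow> z \<le> x \<longrightarrow> x < b \<longrightarrow> \<bar>q x z\<bar> \<le> \<epsilon>"
  shows "((\<lambda>x. integral {\<kappa>..x} (F x) / B x) \<longlongrightarrow> 0) (at_left b)"
proof (rule tendstoI)
  have F_le_K: "\<bar>F x z\<bar> \<le> K * B' z" if "\<kappa> \<le> z" "z \<le> x" "x < b" "\<bar>q x z\<bar> \<le> K" for x z K
    using F_le[OF that(1-3)] mult_left_mono[OF that(4) B'_nonneg[of z]] that
    by (simp add: mult.commute)
  fix \<epsilon> :: real assume "0 < \<epsilon>"
  then obtain y where y: "y \<in> {\<kappa>..<b}"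
    and small_y: "\<And>x z. y \<le> z \<Longrightarrow> z \<le> x \<Longrightarrow> x < b \<Longrightarrow> \<bar>q x z\<bar> \<le> \<epsilon> / 2"
    using q_small[of "\<epsilon> / 2"] by auto
  have split: "\<bar>integral {\<kappa>..x} (F x)\<bar> \<le> M * (B y - B \<kappa>) + \<epsilon> / 2 * (B x - B y)"
    if x: "x \<in> {y<..<b}" for x
  proof (rule abs_integral_split_le)
    show "\<bar>F x t\<bar> \<le> M * B' t" if "t \<in> {\<kappa>..y}" for t
      by (rule F_le_K) (use that x y q_bounded in auto)
    show "\<bar>F x t\<bar> \<le> \<epsilon> / 2 * B' t" if "t \<in> {y..x}" for t
      by (rule F_le_K) (use that x y small_y in auto)
  qed (use x y B in auto)
  have "\<forall>\<^sub>F x in at_left b. 2 * M * (B y - B \<kappa>) / \<epsilon> < B x"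
    using B_lim by (simp add: filterlim_at_top_dense)
  moreover have "\<forall>\<^sub>F x in at_left b. x \<in> {y<..<b}"
    using y by (intro eventually_at_left_real) simp
  ultimately show "\<forall>\<^sub>F x in at_left b. dist (integral {\<kappa>..x} (F x) / B x) 0 < \<epsilon>"
  proof eventually_elim
    case (elim x)
    then have "0 < B x" "0 < B y" using B_pos y by auto
    have "2 * M * (B y - B \<kappa>) < \<epsilon> * B x"
      using elim(1) \<open>0 < \<epsilon>\<close> by (simp add: divide_less_eq mult.commute)
    moreover have "0 < \<epsilon> * B y" using \<open>0 < \<epsilon>\<close> \<open>0 < B y\<close> by simp
    ultimately have "M * (B y - B \<kappa>) + \<epsilon> / 2 * (B x - B y) < \<epsilon> * B x"
      by (simp add: field_simps)
    with split[OF elim(2)] \<open>0 < B x\<close> show ?case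
      by (simp add: abs_div divide_less_eq)
  qed
qed

theorem mainTheorem5:
  fixes h g B D :: "real \<Rightarrow> real" and \<kappa> :: real
  assumes smooth: "smooth_real h"
    and h_le0: "\<And>T. T \<le> 0 \<Longrightarrow> h T = pi / 2"
    and h_mid: "\<And>T. 0 < T \<Longrightarrow> T < 1 \<Longrightarrow> 0 < h T \<and> h T < pi / 2"
    and h_ge1: "\<And>T. 1 \<le> T \<Longrightarrow> h T = 0"
    and g_def: "\<And>x. 0 < x \<Longrightarrow> x < 1 \<Longrightarrow> g x = tan (h x)"
    and B_def: "\<And>x. 0 \<le> x \<Longrightarrow> x < 1 \<Longrightarrow> B x = exp (integral {0..x} (\<lambda>z. cot (h z)))"
    and g3: "\<And>x. 0 < x \<Longrightarrow> x < 1 \<Longrightarrow> (deriv ^^ 3) g x < 0"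
    and \<kappa>: "0 < \<kappa>" "\<kappa> < 1"
    and D_def: "\<And>x. \<kappa> < x \<Longrightarrow> x < 1 \<Longrightarrow> D x =
       (1 / B x) * integral {\<kappa>..x} (\<lambda>z. deriv B z * (cos (x - z) / (x - z))
            * ((g x - g z) / (x - z) - deriv g x))"
  shows "(D \<longlongrightarrow> 0) (at_left 1)"
proof -
  have cos_ne: "cos (h t) \<noteq> 0" if "t \<in> {\<kappa>..1}" for t
  proof -
    have "0 \<le> h t \<and> h t < pi / 2" using h_mid[of t] h_ge1[of t] that \<kappa> by (cases "t < 1") auto
    then show ?thesis using cos_gt_zero_pi[of "h t"] by simp
  qed
  define q where "q = second_order_quotient (\<lambda>t. tan (h t))"
  obtain M where M: "\<And>x z. \<kappa> \<le> z \<Longrightarrow> z \<le> x \<Longrightarrow> x \<le> 1 \<Longrightarrow> \<bar>q x z\<bar> \<le> M"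
    using tan_comp_second_order_quotient_bounds(1)[OF smooth h_ge1 \<kappa>(2) cos_ne] by (auto simp: q_def)
  have "h 0 = pi / 2" "h 1 = 0" by (simp_all add: h_le0 h_ge1)
  note B = exp_integral_cot_comp[OF smooth this h_mid B_def]
  define F where "F = (\<lambda>x z. deriv B z * (cos (x - z) / (x - z)) * ((g x - g z) / (x - z) - deriv g x))"
  have F_le: "\<bar>F x z\<bar> \<le> deriv B z * \<bar>q x z\<bar>" if "\<kappa> \<le> z" "z \<le> x" "x < 1" for x z
  proof -
    have "F x z = deriv B z * cos (x - z) * second_order_quotient g x z"
      by (simp add: F_def second_order_quotient_def)
    also have "second_order_quotient g x z = q x z"
      unfolding q_def by (rule second_order_quotient_cong[of "{0<..<1}"]) (use that \<kappa> g_def in auto)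
    finally have "\<bar>F x z\<bar> = \<bar>cos (x - z)\<bar> * (deriv B z * \<bar>q x z\<bar>)"
      using B(2)[of z] that \<kappa> by (simp add: abs_mult)
    also have "\<dots> \<le> deriv B z * \<bar>q x z\<bar>"
      using B(2)[of z] that \<kappa> by (intro mult_left_le_one_le) auto
    finally show ?thesis .
  qed
  have "((\<lambda>x. integral {\<kappa>..x} (F x) / B x) \<longlongrightarrow> 0) (at_left 1)"
  proof (rule integral_weighted_average_tendsto_0[where B'="deriv B" and q=q and M=M])
    show "\<exists>y\<in>{\<kappa>..<1}. \<forall>x z. y \<le> z \<longrightarrow> z \<le> x \<longrightarrow> x < 1 \<longrightarrow> \<bar>q x z\<bar> \<le> \<epsilon>"
      if "0 < \<epsilon>" for \<epsilon>
      using tan_comp_second_order_quotient_bounds(2)[OF smooth h_ge1 \<kappa>(2) cos_ne that]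
      unfolding q_def by (meson less_imp_le)
  qed (use \<kappa> B B_def F_le M in \<open>auto intro: less_imp_le\<close>)
  moreover have "\<forall>\<^sub>F x in at_left 1. integral {\<kappa>..x} (F x) / B x = D x"
    using eventually_at_left_real[OF \<kappa>(2)] by (auto elim!: eventually_mono simp: D_def F_def)
  ultimately show ?thesis by (rule Lim_transform_eventually)
qed

end
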